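(* Let $\alpha,\beta>0$, $\mathbf{c}=(c_j)_{j\in\mathbb{Z}}\in L^\infty(\mathbb{R}_+,\ell^\infty(\mathbb{Z}))$ and $\zeta,\xi:\mathbb{R}_+\to\mathbb{R}$ continuous. Let $W_j,Q_j\in\mathscr{C}^1([0,+\infty),\mathbb{R})$ ($j\in\mathbb{Z}$) satisfy, for all $t>0$ and integers $\zeta(t)\le j\le\xi(t)$, $$W_j'(t)\ge-2\alpha W_j(t)+\beta(Q_j(t)+Q_{j+1}(t)),\qquad Q_j'(t)\ge c_j(t)Q_j(t)+\alpha(W_j(t)+W_{j-1}(t)).$$ Assume $W_j(0)\ge0$, $Q_j(0)\ge0$ for all integers $\zeta(0)-1\le j\le\xi(0)+1$, and $W_j(t)\ge0$, $Q_j(t)\ge0$ for all $t>0$ and integers $j\in[\zeta(t)-1,\zeta(t))\cup(\xi(t),\xi(t)+1]$. Then $W_j(t)\ge0$ and $Q_j(t)\ge0$ for all $t>0$ and integers $\zeta(t)\le j\le\xi(t)$. *)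

theory Defs
  imports "HOL-Analysis.Analysis"
begin

end

theory Submission
  imports Defs
begin

(* Add \<epsilon> e^(\<kappa> t) to every W_j and Q_j, with \<kappa> large compared with \<alpha>, \<beta> and sup c.
   At a first time where a perturbed W_j (or Q_j) of the window touches zero, all its neighbours
   are still nonnegative after perturbation, so the differential inequality makes its derivative
   strictly positive, which is impossible for a function that was positive just before.
   An index can enter the window only from the boundary strip, where positivity is assumed,
   because the window moves continuously. Continuous induction in time therefore keeps the
   perturbed functions positive on the window, and \<epsilon> \<rightarrow> 0 gives the claim. *)

lemma real_continuous_induct:
  fixes P :: "real \<Rightarrow> bool"
  assumes "a \<le> t"
    and base: "P a"
    and left: "\<And>t. a < t \<Longrightarrow> (\<And>s. a < s \<Longrightarrow> s < t \<Longrightarrow> P s) \<Longrightarrow> P t"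
    and right: "\<And>t. a \<le> t \<Longrightarrow> P t \<Longrightarrow> eventually P (at_right t)"
  shows "P t"
proof (rule ccontr)
  define B where "B = {s. a \<le> s \<and> \<not> P s}"
  define T where "T = Inf B"
  assume "\<not> P t"
  then have "B \<noteq> {}" using \<open>a \<le> t\<close> by (auto simp: B_def)
  have bdd: "bdd_below B" by (rule bdd_belowI[of _ a]) (auto simp: B_def)
  have "a \<le> T" unfolding T_def using \<open>B \<noteq> {}\<close> by (intro cInf_greatest) (auto simp: B_def)
  have below: "P s" if "a \<le> s" "s < T" for s
    using cInf_lower[OF _ bdd, of s] that by (force simp: B_def T_def)
  have "P T"
    using base left below \<open>a \<le> T\<close> by (cases "T = a") auto
  then obtain b where "T < b" and b: "\<And>s. T < s \<Longrightarrow> s < b \<Longrightarrow> P s"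
    using right[OF \<open>a \<le> T\<close>] by (auto simp: eventually_at_right_field)
  have "b \<le> T" unfolding T_def
  proof (rule cInf_greatest[OF \<open>B \<noteq> {}\<close>])
    fix s assume "s \<in> B"
    then show "b \<le> s"
      using below b \<open>P T\<close> by (metis B_def mem_Collect_eq linorder_not_le linorder_cases)
  qed
  then show False using \<open>T < b\<close> by simp
qed

lemma has_real_derivative_nonpos_at_first_zero:
  fixes f :: "real \<Rightarrow> real"
  assumes f': "(f has_real_derivative D) (at t)"
    and pos: "eventually (\<lambda>s. 0 < f s) (at_left t)" and "f t \<le> 0"
  shows "D \<le> 0"
proof (rule ccontr)
  assume "\<not> D \<le> 0"
  then obtain d where "0 < d" and d: "\<And>h. 0 < h \<Longrightarrow> h < d \<Longrightarrow> f (t - h) < f t"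
    using DERIV_pos_inc_left[OF f'] by (meson not_le)
  have "eventually (\<lambda>s. f s < 0) (at_left t)"
    unfolding eventually_at_left_field
  proof (intro exI conjI allI impI)
    show "t - d < t" using \<open>0 < d\<close> by simp
    fix s assume "t - d < s" "s < t"
    then show "f s < 0" using d[of "t - s"] \<open>f t \<le> 0\<close> by simp
  qed
  with pos have "eventually (\<lambda>_. False) (at_left t)"
    by eventually_elim simp
  then show False by simp
qed

lemma continuous_on_atLeast_tendsto_at_right:
  fixes f :: "real \<Rightarrow> 'a::topological_space"
  assumes "continuous_on {a..} f" and "a \<le> t"
  shows "(f \<longlongrightarrow> f t) (at_right t)"
  using assms unfolding continuous_on_def by (auto intro: tendsto_within_subset)

lemma continuous_on_atLeast_tendsto_at_left:
  fixes f :: "real \<Rightarrow> 'a::topological_space"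
  assumes "continuous_on {a..} f" and "a < t"
  shows "(f \<longlongrightarrow> f t) (at_left t)"
proof -
  have "isCont f t" by (rule continuous_on_interior[OF assms(1)]) (use assms(2) in auto)
  then show ?thesis by (simp add: isCont_def filterlim_at_split)
qed

locale window_system =
  fixes \<alpha> \<beta> :: real
    and c :: "real \<Rightarrow> int \<Rightarrow> real"
    and \<zeta> \<xi> :: "real \<Rightarrow> real"
    and W Q W' Q' :: "int \<Rightarrow> real \<Rightarrow> real"
  assumes alpha_nonneg: "0 \<le> \<alpha>" and beta_nonneg: "0 \<le> \<beta>"
    and c_bdd_above: "\<exists>M. \<forall>t>0. \<forall>j. c t j \<le> M"
    and zeta_cont: "continuous_on {0..} \<zeta>"
    and xi_cont: "continuous_on {0..} \<xi>"
    and W_cont: "\<And>j. continuous_on {0..} (W j)"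
    and Q_cont: "\<And>j. continuous_on {0..} (Q j)"
    and W_deriv: "\<And>j t. 0 < t \<Longrightarrow> (W j has_real_derivative W' j t) (at t)"
    and Q_deriv: "\<And>j t. 0 < t \<Longrightarrow> (Q j has_real_derivative Q' j t) (at t)"
    and ineqW: "\<And>t j. 0 < t \<Longrightarrow> \<zeta> t \<le> of_int j \<Longrightarrow> of_int j \<le> \<xi> t \<Longrightarrow>
        - 2 * \<alpha> * W j t + \<beta> * (Q j t + Q (j + 1) t) \<le> W' j t"
    and ineqQ: "\<And>t j. 0 < t \<Longrightarrow> \<zeta> t \<le> of_int j \<Longrightarrow> of_int j \<le> \<xi> t \<Longrightarrow>
        c t j * Q j t + \<alpha> * (W j t + W (j - 1) t) \<le> Q' j t"
    and init: "\<And>j. \<zeta> 0 \<le> of_int j \<Longrightarrow> of_int j \<le> \<xi> 0 \<Longrightarrow> 0 \<le> W j 0 \<and> 0 \<le> Q j 0"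
    and strip: "\<And>t j. 0 < t \<Longrightarrow>
        (\<zeta> t - 1 \<le> of_int j \<and> of_int j < \<zeta> t) \<or> (\<xi> t < of_int j \<and> of_int j \<le> \<xi> t + 1) \<Longrightarrow>
        0 \<le> W j t \<and> 0 \<le> Q j t"
begin

definition in_window :: "real \<Rightarrow> int \<Rightarrow> bool" where
  "in_window t j \<longleftrightarrow> \<zeta> t \<le> of_int j \<and> of_int j \<le> \<xi> t"

end

locale window_perturbation = window_system +
  fixes \<kappa> \<epsilon> :: real
  assumes eps_pos: "0 < \<epsilon>"
    and kappa_W: "2 * \<beta> < \<kappa> + 2 * \<alpha>"
    and kappa_Q: "\<And>t j. 0 < t \<Longrightarrow> c t j + 2 * \<alpha> < \<kappa>"
begin

definition pert :: "real \<Rightarrow> real" where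
  "pert t = \<epsilon> * exp (\<kappa> * t)"

definition W_pert :: "int \<Rightarrow> real \<Rightarrow> real" where
  "W_pert j t = W j t + pert t"

definition Q_pert :: "int \<Rightarrow> real \<Rightarrow> real" where
  "Q_pert j t = Q j t + pert t"

definition window_pos :: "real \<Rightarrow> bool" where
  "window_pos t \<longleftrightarrow> (\<forall>j. in_window t j \<longrightarrow> 0 < W_pert j t \<and> 0 < Q_pert j t)"

lemma pert_pos: "0 < pert t"
  using eps_pos by (simp add: pert_def)

lemma pert_deriv: "(pert has_real_derivative \<kappa> * pert t) (at t)"
  unfolding pert_def by (auto intro!: derivative_eq_intros)

lemma pert_cont: "continuous_on {0..} pert"
  unfolding pert_def by (intro continuous_intros)

lemma W_pert_cont: "continuous_on {0..} (W_pert j)"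
  unfolding W_pert_def[abs_def] using W_cont pert_cont by (intro continuous_intros)

lemma Q_pert_cont: "continuous_on {0..} (Q_pert j)"
  unfolding Q_pert_def[abs_def] using Q_cont pert_cont by (intro continuous_intros)

lemma pert_pos_near_window:
  assumes "0 < t" "\<zeta> t - 1 \<le> of_int j" "of_int j \<le> \<xi> t + 1" "\<not> in_window t j"
  shows "0 < W_pert j t \<and> 0 < Q_pert j t"
  using assms strip[of t j] pert_pos[of t] by (force simp: in_window_def W_pert_def Q_pert_def)

lemma window_pos_0: "window_pos 0"
  using init pert_pos[of 0] by (force simp: window_pos_def in_window_def W_pert_def Q_pert_def)

lemma eventually_pert_pos_at_left:
  assumes "0 < t" and before: "\<And>s. 0 < s \<Longrightarrow> s < t \<Longrightarrow> window_pos s" and "in_window t j"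
  shows "eventually (\<lambda>s. 0 < W_pert j s \<and> 0 < Q_pert j s) (at_left t)"
proof -
  have "eventually (\<lambda>s. \<zeta> s < \<zeta> t + 1) (at_left t)"
    using continuous_on_atLeast_tendsto_at_left[OF zeta_cont \<open>0 < t\<close>]
    by (rule order_tendstoD) simp
  moreover have "eventually (\<lambda>s. \<xi> t - 1 < \<xi> s) (at_left t)"
    using continuous_on_atLeast_tendsto_at_left[OF xi_cont \<open>0 < t\<close>]
    by (rule order_tendstoD) simp
  moreover have "eventually (\<lambda>s. s \<in> {0<..<t}) (at_left t)"
    using eventually_at_left_real[OF \<open>0 < t\<close>] .
  ultimately show ?thesis
  proof eventually_elim
    case (elim s)
    then have "\<zeta> s - 1 \<le> of_int j" "of_int j \<le> \<xi> s + 1"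
      using \<open>in_window t j\<close> by (auto simp: in_window_def)
    then show ?case
      using before[of s] pert_pos_near_window[of s j] elim by (auto simp: window_pos_def)
  qed
qed

lemma pert_nonneg_at_left_limit:
  assumes "0 < t" and before: "\<And>s. 0 < s \<Longrightarrow> s < t \<Longrightarrow> window_pos s"
    and "\<zeta> t - 1 \<le> of_int j" "of_int j \<le> \<xi> t + 1"
  shows "0 \<le> W_pert j t \<and> 0 \<le> Q_pert j t"
proof (cases "in_window t j")
  case True
  have pos: "eventually (\<lambda>s. 0 < W_pert j s \<and> 0 < Q_pert j s) (at_left t)"
    using eventually_pert_pos_at_left[OF \<open>0 < t\<close> before True] .
  have "0 \<le> W_pert j t"
    by (rule tendsto_lowerbound[OF continuous_on_atLeast_tendsto_at_left[OF W_pert_cont \<open>0 < t\<close>]])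
      (use pos in \<open>auto elim: eventually_mono\<close>)
  moreover have "0 \<le> Q_pert j t"
    by (rule tendsto_lowerbound[OF continuous_on_atLeast_tendsto_at_left[OF Q_pert_cont \<open>0 < t\<close>]])
      (use pos in \<open>auto elim: eventually_mono\<close>)
  ultimately show ?thesis ..
next
  case False
  then show ?thesis using pert_pos_near_window[OF assms(1,3,4)] by simp
qed

lemma W_pert_pos_at_left_limit:
  assumes "0 < t" and before: "\<And>s. 0 < s \<Longrightarrow> s < t \<Longrightarrow> window_pos s" and win: "in_window t j"
  shows "0 < W_pert j t"
proof (rule ccontr)
  define E where "E = pert t"
  note near = pert_nonneg_at_left_limit[OF \<open>0 < t\<close> before]
  assume "\<not> 0 < W_pert j t"
  with near[of j] win have zero: "W j t = - E" by (auto simp: in_window_def W_pert_def E_def)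
  have "(W_pert j has_real_derivative W' j t + \<kappa> * E) (at t)"
    unfolding W_pert_def[abs_def] E_def by (intro DERIV_add W_deriv[OF \<open>0 < t\<close>] pert_deriv)
  then have "W' j t + \<kappa> * E \<le> 0"
    by (rule has_real_derivative_nonpos_at_first_zero)
      (use eventually_pert_pos_at_left[OF \<open>0 < t\<close> before win] \<open>\<not> 0 < W_pert j t\<close>
        in \<open>auto elim: eventually_mono\<close>)
  moreover have "\<beta> * (- 2 * E) \<le> \<beta> * (Q j t + Q (j + 1) t)"
    using near[of j] near[of "j + 1"] win beta_nonneg
    by (intro mult_left_mono) (auto simp: in_window_def Q_pert_def E_def)
  moreover have "0 < (\<kappa> + 2 * \<alpha> - 2 * \<beta>) * E"
    using kappa_W pert_pos by (simp add: E_def)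
  moreover note ineqW[OF \<open>0 < t\<close>, of j] win zero
  ultimately show False by (auto simp: in_window_def algebra_simps)
qed

lemma Q_pert_pos_at_left_limit:
  assumes "0 < t" and before: "\<And>s. 0 < s \<Longrightarrow> s < t \<Longrightarrow> window_pos s" and win: "in_window t j"
  shows "0 < Q_pert j t"
proof (rule ccontr)
  define E where "E = pert t"
  note near = pert_nonneg_at_left_limit[OF \<open>0 < t\<close> before]
  assume "\<not> 0 < Q_pert j t"
  with near[of j] win have zero: "Q j t = - E" by (auto simp: in_window_def Q_pert_def E_def)
  have "(Q_pert j has_real_derivative Q' j t + \<kappa> * E) (at t)"
    unfolding Q_pert_def[abs_def] E_def by (intro DERIV_add Q_deriv[OF \<open>0 < t\<close>] pert_deriv)
  then have "Q' j t + \<kappa> * E \<le> 0"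
    by (rule has_real_derivative_nonpos_at_first_zero)
      (use eventually_pert_pos_at_left[OF \<open>0 < t\<close> before win] \<open>\<not> 0 < Q_pert j t\<close>
        in \<open>auto elim: eventually_mono\<close>)
  moreover have "\<alpha> * (- 2 * E) \<le> \<alpha> * (W j t + W (j - 1) t)"
    using near[of j] near[of "j - 1"] win alpha_nonneg
    by (intro mult_left_mono) (auto simp: in_window_def W_pert_def E_def)
  moreover have "0 < (\<kappa> - c t j - 2 * \<alpha>) * E"
    using kappa_Q[OF \<open>0 < t\<close>, of j] pert_pos by (simp add: E_def)
  moreover note ineqQ[OF \<open>0 < t\<close>, of j] win zero
  ultimately show False by (auto simp: in_window_def algebra_simps)
qed

lemma window_pos_at_left_limit:
  assumes "0 < t" and "\<And>s. 0 < s \<Longrightarrow> s < t \<Longrightarrow> window_pos s"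
  shows "window_pos t"
  unfolding window_pos_def
  using W_pert_pos_at_left_limit[OF assms] Q_pert_pos_at_left_limit[OF assms] by blast

lemma eventually_window_pos_at_right:
  assumes "0 \<le> t" and "window_pos t"
  shows "eventually window_pos (at_right t)"
proof -
  define F where "F = {j::int. \<zeta> t - 1 < of_int j \<and> of_int j < \<xi> t + 1}"
  have "F \<subseteq> {\<lfloor>\<zeta> t\<rfloor> - 1 .. \<lceil>\<xi> t\<rceil> + 1}"
    unfolding F_def by (auto; linarith)
  then have "finite F" by (rule finite_subset) simp
  have lim_zeta: "(\<zeta> \<longlongrightarrow> \<zeta> t) (at_right t)" and lim_xi: "(\<xi> \<longlongrightarrow> \<xi> t) (at_right t)"
    using zeta_cont xi_cont \<open>0 \<le> t\<close> by (auto intro: continuous_on_atLeast_tendsto_at_right)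
  have "\<forall>j\<in>F. eventually (\<lambda>s. in_window s j \<longrightarrow> 0 < W_pert j s \<and> 0 < Q_pert j s) (at_right t)"
  proof
    fix j
    consider "in_window t j" | "of_int j < \<zeta> t" | "\<xi> t < of_int j"
      unfolding in_window_def by linarith
    then show "eventually (\<lambda>s. in_window s j \<longrightarrow> 0 < W_pert j s \<and> 0 < Q_pert j s) (at_right t)"
    proof cases
      case 1
      then have "0 < W_pert j t" "0 < Q_pert j t" using \<open>window_pos t\<close> by (auto simp: window_pos_def)
      then have "eventually (\<lambda>s. 0 < W_pert j s) (at_right t)" "eventually (\<lambda>s. 0 < Q_pert j s) (at_right t)"
        using continuous_on_atLeast_tendsto_at_right[OF W_pert_cont \<open>0 \<le> t\<close>]
          continuous_on_atLeast_tendsto_at_right[OF Q_pert_cont \<open>0 \<le> t\<close>]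
        by (auto dest: order_tendstoD(1))
      then show ?thesis by eventually_elim simp
    next
      case 2
      then have "eventually (\<lambda>s. of_int j < \<zeta> s) (at_right t)"
        using lim_zeta by (rule order_tendstoD(1)[rotated])
      then show ?thesis by eventually_elim (simp add: in_window_def)
    next
      case 3
      then have "eventually (\<lambda>s. \<xi> s < of_int j) (at_right t)"
        using lim_xi by (rule order_tendstoD(2)[rotated])
      then show ?thesis by eventually_elim (simp add: in_window_def)
    qed
  qed
  moreover have "eventually (\<lambda>s. \<zeta> t - 1 < \<zeta> s) (at_right t)"
    using lim_zeta by (rule order_tendstoD) simp
  moreover have "eventually (\<lambda>s. \<xi> s < \<xi> t + 1) (at_right t)"
    using lim_xi by (rule order_tendstoD) simp
  ultimately show ?thesis
    unfolding eventually_ball_finite_distrib[OF \<open>finite F\<close>, symmetric]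
    by eventually_elim (force simp: window_pos_def in_window_def F_def)
qed

lemma window_pos: "0 \<le> t \<Longrightarrow> window_pos t"
  by (rule real_continuous_induct[of 0])
    (use window_pos_0 window_pos_at_left_limit eventually_window_pos_at_right in auto)

end

context window_system
begin

lemma nonneg_in_window:
  assumes "0 \<le> t" and "in_window t j"
  shows "0 \<le> W j t \<and> 0 \<le> Q j t"
proof -
  obtain M where M: "\<And>t j. 0 < t \<Longrightarrow> c t j \<le> M" using c_bdd_above by blast
  define \<kappa> where "\<kappa> = 2 * \<alpha> + 2 * \<beta> + \<bar>M\<bar> + 1"
  have "0 \<le> W j t + e \<and> 0 \<le> Q j t + e" if "0 < e" for e
  proof -
    have "c s i + 2 * \<alpha> < \<kappa>" if "0 < s" for s i
      using M[OF that, of i] beta_nonneg abs_ge_self[of M] by (simp add: \<kappa>_def)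
    moreover have "2 * \<beta> < \<kappa> + 2 * \<alpha>"
      using alpha_nonneg abs_ge_zero[of M] by (simp add: \<kappa>_def)
    ultimately interpret window_perturbation \<alpha> \<beta> c \<zeta> \<xi> W Q W' Q' \<kappa> "e / exp (\<kappa> * t)"
      using \<open>0 < e\<close> by unfold_locales simp_all
    show ?thesis
      using window_pos[OF \<open>0 \<le> t\<close>] \<open>in_window t j\<close>
      by (auto simp: window_pos_def W_pert_def Q_pert_def pert_def)
  qed
  then show ?thesis
    using field_le_epsilon[of 0 "W j t"] field_le_epsilon[of 0 "Q j t"] by auto
qed

end

theorem propositionB6:
  fixes \<alpha> \<beta> :: real
    and c :: "real \<Rightarrow> int \<Rightarrow> real"
    and \<zeta> \<xi> :: "real \<Rightarrow> real"
    and W Q W' Q' :: "int \<Rightarrow> real \<Rightarrow> real"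
  assumes alpha_pos: "\<alpha> > 0" and beta_pos: "\<beta> > 0"
    and c_bdd: "\<exists>M. \<forall>t\<ge>0. \<forall>j. \<bar>c t j\<bar> \<le> M"
    and zeta_cont: "continuous_on {0..} \<zeta>"
    and xi_cont: "continuous_on {0..} \<xi>"
    and W_deriv: "\<And>j t. t \<ge> 0 \<Longrightarrow> (W j has_real_derivative W' j t) (at t within {0..})"
    and W'_cont: "\<And>j. continuous_on {0..} (W' j)"
    and Q_deriv: "\<And>j t. t \<ge> 0 \<Longrightarrow> (Q j has_real_derivative Q' j t) (at t within {0..})"
    and Q'_cont: "\<And>j. continuous_on {0..} (Q' j)"
    and ineqW: "\<And>t j. t > 0 \<Longrightarrow> \<zeta> t \<le> of_int j \<Longrightarrow> of_int j \<le> \<xi> t \<Longrightarrow>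
        W' j t \<ge> - 2 * \<alpha> * W j t + \<beta> * (Q j t + Q (j + 1) t)"
    and ineqQ: "\<And>t j. t > 0 \<Longrightarrow> \<zeta> t \<le> of_int j \<Longrightarrow> of_int j \<le> \<xi> t \<Longrightarrow>
        Q' j t \<ge> c t j * Q j t + \<alpha> * (W j t + W (j - 1) t)"
    and init: "\<And>j. \<zeta> 0 - 1 \<le> of_int j \<Longrightarrow> of_int j \<le> \<xi> 0 + 1 \<Longrightarrow>
        W j 0 \<ge> 0 \<and> Q j 0 \<ge> 0"
    and bdry: "\<And>t j. t > 0 \<Longrightarrow>
        ((\<zeta> t - 1 \<le> of_int j \<and> of_int j < \<zeta> t) \<or> (\<xi> t < of_int j \<and> of_int j \<le> \<xi> t + 1)) \<Longrightarrow>
        W j t \<ge> 0 \<and> Q j t \<ge> 0"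
  shows "\<forall>t>0. \<forall>j::int. \<zeta> t \<le> of_int j \<and> of_int j \<le> \<xi> t \<longrightarrow> W j t \<ge> 0 \<and> Q j t \<ge> 0"
proof -
  have c_bdd_above: "\<exists>M. \<forall>t>0. \<forall>j. c t j \<le> M"
    using c_bdd by (meson abs_le_D1 less_imp_le)
  have cont: "continuous_on {0..} (W j)" "continuous_on {0..} (Q j)" for j
    by (auto simp: continuous_on_eq_continuous_within
        intro!: DERIV_continuous[OF W_deriv] DERIV_continuous[OF Q_deriv])
  have deriv: "(W j has_real_derivative W' j t) (at t)" "(Q j has_real_derivative Q' j t) (at t)"
    if "0 < t" for j t
    using W_deriv[of t j] Q_deriv[of t j] at_within_interior[of t "{0..}"] that by simp_all
  interpret window_system \<alpha> \<beta> c \<zeta> \<xi> W Q W' Q'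
  proof
    show "\<And>j. \<zeta> 0 \<le> of_int j \<Longrightarrow> of_int j \<le> \<xi> 0 \<Longrightarrow> 0 \<le> W j 0 \<and> 0 \<le> Q j 0"
      using init by force
  qed (use alpha_pos beta_pos c_bdd_above zeta_cont xi_cont cont deriv ineqW ineqQ bdry in auto)
  show ?thesis using nonneg_in_window by (simp add: in_window_def)
qed

end
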